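(* Consider the single-sensor Markov decision process with state $(x,q)$, where $x\in\{1,2,3,\dots\}$ and $q\in\{1,\dots,Q\}$, action $s\in\{0,1\}$, and transitions: the next state is $(x+1,q')$ if $s=0$ and $(1,q')$ if $s=1$, where $q'$ is drawn with probability $p_{q,q'}$ independently of $x$ and $s$. The one-step cost is $C_X(x,q,s)+\lambda C_Q(x,q,s)$ with $C_X(x,q,s)=x+Ws$ and $C_Q(x,q,s)=\omega(q)s$, for fixed constants $W\ge 0$ and $\lambda\ge 0$. Then there is an optimal stationary deterministic policy for minimizing the long-run average cost $$\lim_{T\to\infty}\frac{1}{T}\mathbb{E}_\pi\Big[\sum_{t=1}^T \big(C_X(x(t),q(t),s(t))+\lambda C_Q(x(t),q(t),s(t))\big)\Big]$$ that has a threshold structure: for each channel state $q$ there exists a finite threshold $\tau_q$ such that the optimal action is $s^*(x,q)=1$ whenever $x\ge \tau_q$ and $s^*(x,q)=0$ whenever $x<\tau_q$. *)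

theory Defs
  imports Complex_Main "HOL-Library.Extended_Real" "HOL-Library.Liminf_Limsup"
begin

(* State: (x, q) with x >= 1 the age, q in {1..Q} the channel state. Action s in {0,1}. *)
type_synonym state = "nat \<times> nat"

(* A history: list of past (state, action) pairs.  A (general, history-dependent,
   randomized) policy maps the history and the current state to a probability
   of each action s \<in> {0,1}. *)
type_synonym policy = "(state \<times> nat) list \<Rightarrow> state \<Rightarrow> nat \<Rightarrow> real"

definition valid_policy :: "policy \<Rightarrow> bool" where
  "valid_policy \<pi> \<longleftrightarrow>
     (\<forall>h st s. 0 \<le> \<pi> h st s) \<and> (\<forall>h st. \<pi> h st 0 + \<pi> h st 1 = 1)"

definition stat_det :: "(nat \<Rightarrow> nat \<Rightarrow> nat) \<Rightarrow> policy" where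
  "stat_det \<mu> = (\<lambda>h st s. if s = \<mu> (fst st) (snd st) then 1 else 0)"

definition C_X :: "real \<Rightarrow> nat \<Rightarrow> nat \<Rightarrow> nat \<Rightarrow> real" where
  "C_X W x q s = real x + W * real s"

definition C_Q :: "(nat \<Rightarrow> real) \<Rightarrow> nat \<Rightarrow> nat \<Rightarrow> nat \<Rightarrow> real" where
  "C_Q \<omega> x q s = \<omega> q * real s"

definition next_age :: "nat \<Rightarrow> nat \<Rightarrow> nat" where
  "next_age x s = (if s = 0 then x + 1 else 1)"

fun exp_cost :: "nat \<Rightarrow> (nat \<Rightarrow> nat \<Rightarrow> real) \<Rightarrow> real \<Rightarrow> real \<Rightarrow> (nat \<Rightarrow> real) \<Rightarrow> policy
                  \<Rightarrow> nat \<Rightarrow> (state \<times> nat) list \<Rightarrow> state \<Rightarrow> real" where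
  "exp_cost Q p W lam \<omega> \<pi> 0 h st = 0"
| "exp_cost Q p W lam \<omega> \<pi> (Suc T) h st =
     (\<Sum>s\<in>{0,1}. \<pi> h st s *
        (C_X W (fst st) (snd st) s + lam * C_Q \<omega> (fst st) (snd st) s +
         (\<Sum>q'\<in>{1..Q}. p (snd st) q' *
            exp_cost Q p W lam \<omega> \<pi> T (h @ [(st, s)]) (next_age (fst st) s, q'))))"

definition avg_cost :: "nat \<Rightarrow> (nat \<Rightarrow> nat \<Rightarrow> real) \<Rightarrow> real \<Rightarrow> real \<Rightarrow> (nat \<Rightarrow> real) \<Rightarrow> policy
                         \<Rightarrow> state \<Rightarrow> ereal" where
  "avg_cost Q p W lam \<omega> \<pi> st0 =
     limsup (\<lambda>T. ereal (exp_cost Q p W lam \<omega> \<pi> T [] st0 / real T))"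

end

theory Submission
  imports Defs "HOL-Library.Diagonal_Subsequence"
begin

text \<open>
  For a discount factor \<open>\<beta> < 1\<close>, value iteration yields the discounted values \<open>V\<^sub>\<beta>\<close>, and the relative
  values \<open>V\<^sub>\<beta> x q - V\<^sub>\<beta> 1 q\<close> are monotone in the age \<open>x\<close> and lie between \<open>0\<close> and \<open>x + K\<close>,
  uniformly in \<open>\<beta>\<close>, where \<open>K\<close> bounds the sampling costs \<open>c q = W + \<lambda> \<omega> q\<close>. Along a diagonal subsequence \<open>\<beta> \<rightarrow> 1\<close> they converge to a function \<open>H\<close> solving
  the average-cost optimality equation
    \<open>g q + H x q = x + min (E[H (x + 1) q' | q]) (c q)\<close>,  \<open>H 1 q = 0\<close>,
  whose gain \<open>g\<close> depends on the channel state; this does no harm, since the expected total gain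
  over \<open>T\<close> steps is the same for every policy. As \<open>H\<close> is monotone and grows linearly in \<open>x\<close>,
  the minimum is attained by sampling exactly from a threshold age on.

  Comparing along trajectories, the \<open>T\<close>-step cost of the threshold policy exceeds that of any
  policy \<open>\<pi>\<close> by at most \<open>E\<^sub>\<pi>[H x\<^sub>T] \<le> E\<^sub>\<pi>[x\<^sub>T] + K\<close>. The potential \<open>x (x - 1) / 2\<close>, whose increments
  are paid for by the age cost, bounds \<open>k E\<^sub>\<pi>[x\<^sub>T]\<close> by the cost of \<open>\<pi>\<close> plus \<open>K T + O(k\<^sup>2)\<close>, and
  letting \<open>k \<rightarrow> \<infinity>\<close> compares the average costs.
\<close>

lemma bounded_pointwise_convergent_subseq:
  fixes f :: "nat \<Rightarrow> 'a::countable \<Rightarrow> real"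
  assumes bounded: "\<And>a. \<exists>B. \<forall>k. \<bar>f k a\<bar> \<le> B"
  shows "\<exists>r. strict_mono r \<and> (\<forall>a. convergent (\<lambda>k. f (r k) a))"
proof -
  define P where "P n s \<longleftrightarrow> convergent (\<lambda>k. f (s k) (from_nat n))" for n :: nat and s :: "nat \<Rightarrow> nat"
  have convergent_subseq: "\<exists>r. strict_mono r \<and> P n (s \<circ> r)" if "strict_mono s" for n :: nat and s :: "nat \<Rightarrow> nat"
  proof -
    obtain r where r: "strict_mono r" "monoseq (\<lambda>k. f (s (r k)) (from_nat n))"
      using seq_monosub[of "\<lambda>k. f (s k) (from_nat n)"] by blast
    obtain B where "\<forall>k. \<bar>f (s (r k)) (from_nat n)\<bar> \<le> B"
      using bounded by blast
    then have "Bseq (\<lambda>k. f (s (r k)) (from_nat n))"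
      by (intro BseqI') auto
    with r show ?thesis
      unfolding P_def o_def using Bseq_monoseq_convergent by blast
  qed
  interpret subseqs P
    by unfold_locales (rule convergent_subseq)
  have diagseq_P: "P n diagseq" for n
  proof -
    have "P n (diagseq \<circ> (+) (Suc n))"
    proof (rule diagseq_holds)
      fix r s n assume r: "strict_mono (r :: nat \<Rightarrow> nat)" and "P n s"
      then obtain L where "(\<lambda>k. f (s k) (from_nat n)) \<longlonglongrightarrow> L"
        unfolding P_def convergent_def by blast
      from LIMSEQ_subseq_LIMSEQ[OF this r] show "P n (s \<circ> r)"
        unfolding P_def convergent_def by (auto simp: o_def)
    qed
    then show ?thesis
      unfolding P_def o_def by (subst (asm) add.commute) (rule iffD1[OF convergent_ignore_initial_segment])
  qed
  have "convergent (\<lambda>k. f (diagseq k) a)" for a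
    using diagseq_P[of "to_nat a"] unfolding P_def by simp
  then show ?thesis
    using subseq_diagseq by blast
qed

lemma limsup_average_le_of_eventually:
  fixes a :: "nat \<Rightarrow> real"
  assumes "eventually (\<lambda>T. a T \<le> s * real T + C) sequentially"
  shows "limsup (\<lambda>T. ereal (a T / real T)) \<le> ereal s"
proof -
  have "eventually (\<lambda>T. ereal (a T / real T) \<le> ereal (s + C / real T)) sequentially"
    using assms eventually_gt_at_top[of 0]
  proof eventually_elim
    case (elim T)
    then have "a T / real T \<le> (s * real T + C) / real T"
      by (intro divide_right_mono) auto
    also have "\<dots> = s + C / real T"
      using elim by (simp add: field_simps)
    finally show ?case
      by simp
  qed
  then have "limsup (\<lambda>T. ereal (a T / real T)) \<le> limsup (\<lambda>T. ereal (s + C / real T))"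
    by (rule Limsup_mono)
  also have "\<dots> = ereal s"
  proof (rule lim_imp_Limsup)
    have "(\<lambda>T. s + C / real T) \<longlonglongrightarrow> s"
      using tendsto_add[OF tendsto_const lim_const_over_n, of s C] by simp
    then show "(\<lambda>T. ereal (s + C / real T)) \<longlonglongrightarrow> ereal s"
      by (rule tendsto_ereal)
  qed simp
  finally show ?thesis .
qed

text \<open>Letting \<open>k \<rightarrow> \<infinity>\<close> removes the factor \<open>1 + 1/k\<close> and the drift \<open>K T/k\<close> from the average.\<close>

lemma limsup_average_le:
  fixes a b :: "nat \<Rightarrow> real"
  assumes dominated: "\<And>k. 0 < k \<Longrightarrow> \<exists>C. \<forall>T. a T \<le> (1 + 1/k) * b T + K / k * real T + C"
  shows "limsup (\<lambda>T. ereal (a T / real T)) \<le> limsup (\<lambda>T. ereal (b T / real T))"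
proof (rule ereal_le_real)
  fix z assume z: "limsup (\<lambda>T. ereal (b T / real T)) \<le> ereal z"
  define d where "d n = 1 / real (Suc n)" for n
  define f where "f n = (1 + d n) * (z + d n) + K * d n" for n
  have "limsup (\<lambda>T. ereal (a T / real T)) \<le> ereal (f n)" for n
  proof -
    define k where "k = real (Suc n)"
    have k: "0 < k"
      unfolding k_def by simp
    obtain C where C: "\<And>T. a T \<le> (1 + 1/k) * b T + K / k * real T + C"
      using dominated[OF k] by blast
    have "eventually (\<lambda>T. ereal (b T / real T) < ereal (z + 1/k)) sequentially"
      by (rule Limsup_lessD, rule le_less_trans[OF z]) (use k in simp)
    then have "eventually (\<lambda>T. a T \<le> f n * real T + C) sequentially"
      using eventually_gt_at_top[of 0]
    proof eventually_elim
      case (elim T)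
      then have "b T \<le> (z + 1/k) * real T"
        by (simp add: divide_less_eq)
      then have "(1 + 1/k) * b T \<le> (1 + 1/k) * ((z + 1/k) * real T)"
        using k by (intro mult_left_mono) auto
      then show ?case
        using C[of T] unfolding f_def d_def k_def[symmetric] by (simp add: algebra_simps)
    qed
    then show ?thesis
      by (rule limsup_average_le_of_eventually)
  qed
  moreover have "d \<longlonglongrightarrow> 0"
    unfolding d_def using LIMSEQ_Suc[OF lim_1_over_n] by simp
  then have "(\<lambda>n. ereal (f n)) \<longlonglongrightarrow> ereal ((1 + 0) * (z + 0) + K * 0)"
    unfolding f_def by (intro tendsto_ereal tendsto_add tendsto_mult tendsto_const)
  ultimately show "limsup (\<lambda>T. ereal (a T / real T)) \<le> ereal z"
    using LIMSEQ_le_const by fastforce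
qed

definition valid_state :: "nat \<Rightarrow> state \<Rightarrow> bool" where
  "valid_state Q st \<longleftrightarrow> 1 \<le> fst st \<and> snd st \<in> {1..Q}"

lemma valid_state_next: "q' \<in> {1..Q} \<Longrightarrow> valid_state Q (next_age x s, q')"
  by (auto simp: valid_state_def next_age_def)

lemma valid_policy_stat_det:
  assumes "\<And>x q. \<mu> x q \<in> {0, 1}"
  shows "valid_policy (stat_det \<mu>)"
  unfolding valid_policy_def
proof (intro conjI allI)
  fix h st
  have "\<mu> (fst st) (snd st) = 0 \<or> \<mu> (fst st) (snd st) = 1"
    using assms by simp
  then show "stat_det \<mu> h st 0 + stat_det \<mu> h st 1 = 1"
    by (auto simp: stat_det_def)
qed (simp add: stat_det_def)

lemma valid_policy_nonneg: "valid_policy \<pi> \<Longrightarrow> 0 \<le> \<pi> h st s"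
  unfolding valid_policy_def by blast

lemma sum_actions_const:
  assumes "valid_policy \<pi>"
  shows "(\<Sum>s\<in>{0,1}. \<pi> h st s * a) = a"
proof -
  have "\<pi> h st 0 + \<pi> h st 1 = 1"
    using assms unfolding valid_policy_def by blast
  then show ?thesis
    by (simp add: distrib_right[symmetric])
qed

lemma sum_actions_stat_det:
  assumes "\<mu> (fst st) (snd st) \<in> {0,1}"
  shows "(\<Sum>s\<in>{0,1}. stat_det \<mu> h st s * f s) = f (\<mu> (fst st) (snd st))"
  using assms by (auto simp: stat_det_def)

locale channel_chain =
  fixes Q :: nat and p :: "nat \<Rightarrow> nat \<Rightarrow> real"
  assumes Q_pos: "1 \<le> Q"
    and p_nonneg: "\<And>q q'. q \<in> {1..Q} \<Longrightarrow> q' \<in> {1..Q} \<Longrightarrow> 0 \<le> p q q'"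
    and p_sum: "\<And>q. q \<in> {1..Q} \<Longrightarrow> (\<Sum>q'\<in>{1..Q}. p q q') = 1"
begin

definition next_exp :: "(nat \<Rightarrow> real) \<Rightarrow> nat \<Rightarrow> real" where
  "next_exp f q = (\<Sum>q'\<in>{1..Q}. p q q' * f q')"

lemma next_exp_nonneg:
  "q \<in> {1..Q} \<Longrightarrow> (\<And>q'. q' \<in> {1..Q} \<Longrightarrow> 0 \<le> f q') \<Longrightarrow> 0 \<le> next_exp f q"
  unfolding next_exp_def by (intro sum_nonneg mult_nonneg_nonneg) (auto simp: p_nonneg)

lemma next_exp_cong:
  "q = q' \<Longrightarrow> (\<And>x. x \<in> {1..Q} =simp=> f x = g x) \<Longrightarrow> next_exp f q = next_exp g q'"
  unfolding next_exp_def simp_implies_def by (intro sum.cong) auto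

lemma next_exp_mono:
  "q \<in> {1..Q} \<Longrightarrow> (\<And>q'. q' \<in> {1..Q} \<Longrightarrow> f q' \<le> g q') \<Longrightarrow> next_exp f q \<le> next_exp g q"
  unfolding next_exp_def by (intro sum_mono mult_left_mono) (auto simp: p_nonneg)

lemma next_exp_add: "next_exp (\<lambda>q'. f q' + g q') q = next_exp f q + next_exp g q"
  unfolding next_exp_def by (simp add: distrib_left sum.distrib)

lemma next_exp_diff: "next_exp (\<lambda>q'. f q' - g q') q = next_exp f q - next_exp g q"
  unfolding next_exp_def by (simp add: right_diff_distrib sum_subtractf)

lemma next_exp_scale: "next_exp (\<lambda>q'. a * f q') q = a * next_exp f q"
  unfolding next_exp_def by (simp add: sum_distrib_left algebra_simps)

lemma next_exp_const: "q \<in> {1..Q} \<Longrightarrow> next_exp (\<lambda>_. a) q = a"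
  unfolding next_exp_def using p_sum by (simp add: sum_distrib_right[symmetric])

lemma next_exp_add_const: "q \<in> {1..Q} \<Longrightarrow> next_exp (\<lambda>q'. f q' + a) q = next_exp f q + a"
  by (simp add: next_exp_add next_exp_const)

lemma tendsto_next_exp:
  "(\<And>q'. q' \<in> {1..Q} \<Longrightarrow> (\<lambda>k. f k q') \<longlonglongrightarrow> g q') \<Longrightarrow> (\<lambda>k. next_exp (f k) q) \<longlonglongrightarrow> next_exp g q"
  unfolding next_exp_def by (intro tendsto_sum tendsto_mult tendsto_const) auto

fun horizon_cost :: "policy \<Rightarrow> (state \<Rightarrow> nat \<Rightarrow> real) \<Rightarrow> (state \<Rightarrow> real) \<Rightarrow> nat
    \<Rightarrow> (state \<times> nat) list \<Rightarrow> state \<Rightarrow> real" where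
  "horizon_cost \<pi> c F 0 h st = F st"
| "horizon_cost \<pi> c F (Suc T) h st =
     (\<Sum>s\<in>{0,1}. \<pi> h st s *
        (c st s + next_exp (\<lambda>q'. horizon_cost \<pi> c F T (h @ [(st, s)]) (next_age (fst st) s, q')) (snd st)))"

abbreviation terminal_exp :: "policy \<Rightarrow> (state \<Rightarrow> real) \<Rightarrow> nat \<Rightarrow> (state \<times> nat) list \<Rightarrow> state \<Rightarrow> real" where
  "terminal_exp \<pi> F \<equiv> horizon_cost \<pi> (\<lambda>_ _. 0) F"

lemma exp_cost_eq_horizon_cost:
  "exp_cost Q p W lam \<omega> \<pi> T h st =
   horizon_cost \<pi> (\<lambda>st s. C_X W (fst st) (snd st) s + lam * C_Q \<omega> (fst st) (snd st) s) (\<lambda>_. 0) T h st"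
  by (induction T arbitrary: h st) (simp_all add: next_exp_def)

lemma horizon_cost_split:
  "horizon_cost \<pi> c F T h st = horizon_cost \<pi> c (\<lambda>_. 0) T h st + terminal_exp \<pi> F T h st"
  by (induction T arbitrary: h st) (simp_all add: next_exp_add sum.distrib algebra_simps)

lemma terminal_exp_zero: "terminal_exp \<pi> (\<lambda>_. 0) T h st = 0"
  by (induction T arbitrary: h st) (simp_all add: next_exp_def)

lemma terminal_exp_scale: "terminal_exp \<pi> (\<lambda>st. a * F st) T h st = a * terminal_exp \<pi> F T h st"
  by (induction T arbitrary: h st) (simp_all add: next_exp_scale sum_distrib_left algebra_simps)

lemma terminal_exp_add_const:
  assumes "valid_policy \<pi>" "valid_state Q st"
  shows "terminal_exp \<pi> (\<lambda>st. F st + a) T h st = terminal_exp \<pi> F T h st + a"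
  using assms(2)
proof (induction T arbitrary: h st)
  case (Suc T)
  have IH: "next_exp (\<lambda>q'. terminal_exp \<pi> (\<lambda>st. F st + a) T (h @ [(st, s)]) (next_age (fst st) s, q')) (snd st)
      = next_exp (\<lambda>q'. terminal_exp \<pi> F T (h @ [(st, s)]) (next_age (fst st) s, q')) (snd st) + a" for s
  proof -
    have "snd st \<in> {1..Q}"
      using Suc.prems by (simp add: valid_state_def)
    moreover have "next_exp (\<lambda>q'. terminal_exp \<pi> (\<lambda>st. F st + a) T (h @ [(st, s)]) (next_age (fst st) s, q')) (snd st)
        = next_exp (\<lambda>q'. terminal_exp \<pi> F T (h @ [(st, s)]) (next_age (fst st) s, q') + a) (snd st)"
      by (rule next_exp_cong) (simp_all add: simp_implies_def Suc.IH valid_state_next)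
    ultimately show ?thesis
      by (simp add: next_exp_add_const)
  qed
  have "terminal_exp \<pi> (\<lambda>st. F st + a) (Suc T) h st = (\<Sum>s\<in>{0,1}. \<pi> h st s *
      (0 + next_exp (\<lambda>q'. terminal_exp \<pi> F T (h @ [(st, s)]) (next_age (fst st) s, q')) (snd st)) + \<pi> h st s * a)"
    unfolding horizon_cost.simps IH by (simp add: distrib_left)
  also have "\<dots> = terminal_exp \<pi> F (Suc T) h st + a"
    by (simp only: sum.distrib horizon_cost.simps sum_actions_const[OF assms(1)])
  finally show ?case .
qed simp

lemma terminal_exp_mono:
  assumes "valid_policy \<pi>" "valid_state Q st" "\<And>st. valid_state Q st \<Longrightarrow> F st \<le> G st"
  shows "terminal_exp \<pi> F T h st \<le> terminal_exp \<pi> G T h st"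
  using assms(2)
proof (induction T arbitrary: h st)
  case (Suc T)
  then have q: "snd st \<in> {1..Q}"
    by (simp add: valid_state_def)
  show ?case
    unfolding horizon_cost.simps
    by (intro sum_mono mult_left_mono add_left_mono next_exp_mono[OF q] valid_policy_nonneg[OF assms(1)])
      (use Suc.IH[OF valid_state_next] in simp)
qed (simp add: assms(3))

text \<open>No policy is involved, because the
  channel evolves independently of the actions; this is what allows a channel-dependent gain.\<close>

fun chain_sum :: "(nat \<Rightarrow> real) \<Rightarrow> nat \<Rightarrow> nat \<Rightarrow> real" where
  "chain_sum d 0 q = 0"
| "chain_sum d (Suc T) q = d q + next_exp (chain_sum d T) q"

lemma chain_sum_const: "q \<in> {1..Q} \<Longrightarrow> chain_sum (\<lambda>_. a) T q = a * real T"
proof (induction T arbitrary: q)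
  case (Suc T)
  then have "next_exp (chain_sum (\<lambda>_. a) T) q = next_exp (\<lambda>_. a * real T) q"
    unfolding next_exp_def by (intro sum.cong) auto
  with Suc.prems show ?case
    by (simp add: next_exp_const algebra_simps)
qed simp

lemma subsolution_le_horizon_cost:
  assumes pol: "valid_policy \<pi>" and "valid_state Q st"
    and sub: "\<And>st s. valid_state Q st \<Longrightarrow> s \<in> {0,1} \<Longrightarrow>
        d (snd st) + H st \<le> c st s + next_exp (\<lambda>q'. H (next_age (fst st) s, q')) (snd st)"
  shows "H st + chain_sum d T (snd st) \<le> horizon_cost \<pi> c H T h st"
  using assms(2)
proof (induction T arbitrary: h st)
  case (Suc T)
  have q: "snd st \<in> {1..Q}"
    using Suc.prems by (simp add: valid_state_def)
  have "H st + chain_sum d (Suc T) (snd st) \<le> c st s +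
      next_exp (\<lambda>q'. horizon_cost \<pi> c H T (h @ [(st, s)]) (next_age (fst st) s, q')) (snd st)"
    if s: "s \<in> {0,1}" for s
  proof -
    have "H st + chain_sum d (Suc T) (snd st)
        \<le> c st s + next_exp (\<lambda>q'. H (next_age (fst st) s, q') + chain_sum d T q') (snd st)"
      using sub[OF Suc.prems s] by (simp add: next_exp_add)
    also have "\<dots> \<le> c st s +
        next_exp (\<lambda>q'. horizon_cost \<pi> c H T (h @ [(st, s)]) (next_age (fst st) s, q')) (snd st)"
      by (intro add_left_mono next_exp_mono[OF q]) (use Suc.IH[OF valid_state_next] in simp)
    finally show ?thesis .
  qed
  then have "(\<Sum>s\<in>{0,1}. \<pi> h st s * (H st + chain_sum d (Suc T) (snd st))) \<le> horizon_cost \<pi> c H (Suc T) h st"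
    unfolding horizon_cost.simps by (intro sum_mono mult_left_mono valid_policy_nonneg[OF pol]) auto
  then show ?case
    by (simp only: sum_actions_const[OF pol])
qed simp

lemma horizon_cost_le_supersolution:
  assumes "valid_state Q st"
    and super: "\<And>st. valid_state Q st \<Longrightarrow> \<mu> (fst st) (snd st) \<in> {0,1} \<and>
        c st (\<mu> (fst st) (snd st)) + next_exp (\<lambda>q'. H (next_age (fst st) (\<mu> (fst st) (snd st)), q')) (snd st)
          \<le> d (snd st) + H st"
  shows "horizon_cost (stat_det \<mu>) c H T h st \<le> H st + chain_sum d T (snd st)"
  using assms(1)
proof (induction T arbitrary: h st)
  case (Suc T)
  have q: "snd st \<in> {1..Q}"
    using Suc.prems by (simp add: valid_state_def)
  define m where "m = \<mu> (fst st) (snd st)"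
  have "horizon_cost (stat_det \<mu>) c H (Suc T) h st = c st m +
      next_exp (\<lambda>q'. horizon_cost (stat_det \<mu>) c H T (h @ [(st, m)]) (next_age (fst st) m, q')) (snd st)"
    unfolding horizon_cost.simps m_def using super[OF Suc.prems] by (rule sum_actions_stat_det[OF conjunct1])
  also have "\<dots> \<le> c st m + next_exp (\<lambda>q'. H (next_age (fst st) m, q') + chain_sum d T q') (snd st)"
    by (intro add_left_mono next_exp_mono[OF q]) (use Suc.IH[OF valid_state_next] in simp)
  also have "\<dots> \<le> H st + chain_sum d (Suc T) (snd st)"
    using super[OF Suc.prems] unfolding m_def by (simp add: next_exp_add)
  finally show ?case .
qed simp

end

locale age_mdp = channel_chain +
  fixes c :: "nat \<Rightarrow> real" and K :: real
  assumes abs_c_le: "\<And>q. q \<in> {1..Q} \<Longrightarrow> \<bar>c q\<bar> \<le> K"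
begin

lemma K_nonneg: "0 \<le> K"
  using abs_c_le[of 1] Q_pos by auto

definition stage_cost :: "state \<Rightarrow> nat \<Rightarrow> real" where
  "stage_cost st s = real (fst st) + real s * c (snd st)"

text \<open>Value iteration for the \<open>\<beta>\<close>-discounted problem, with costs shifted by \<open>K\<close> so that the
  iterates are nonnegative and increase with \<open>n\<close>.\<close>

fun disc_iter :: "real \<Rightarrow> nat \<Rightarrow> nat \<Rightarrow> nat \<Rightarrow> real" where
  "disc_iter \<beta> 0 x q = 0"
| "disc_iter \<beta> (Suc n) x q = real x + K +
     min (\<beta> * next_exp (disc_iter \<beta> n (x + 1)) q) (c q + \<beta> * next_exp (disc_iter \<beta> n 1) q)"

context
  fixes \<beta> :: real
  assumes \<beta>_nonneg: "0 \<le> \<beta>" and \<beta>_less_1: "\<beta> < 1"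
begin

lemma disc_iter_nonneg: "q \<in> {1..Q} \<Longrightarrow> 0 \<le> disc_iter \<beta> n x q"
proof (induction n arbitrary: x q)
  case (Suc n)
  have "0 \<le> \<beta> * next_exp (disc_iter \<beta> n (x + 1)) q" "0 \<le> \<beta> * next_exp (disc_iter \<beta> n 1) q"
    using Suc \<beta>_nonneg by (auto intro!: mult_nonneg_nonneg next_exp_nonneg)
  moreover have "0 \<le> K + c q"
    using abs_c_le[OF Suc.prems] by auto
  ultimately show ?case
    using K_nonneg by (simp add: min_def)
qed simp

lemma disc_iter_mono_age: "q \<in> {1..Q} \<Longrightarrow> x \<le> y \<Longrightarrow> disc_iter \<beta> n x q \<le> disc_iter \<beta> n y q"
proof (induction n arbitrary: x y q)
  case (Suc n)
  have "\<beta> * next_exp (disc_iter \<beta> n (x + 1)) q \<le> \<beta> * next_exp (disc_iter \<beta> n (y + 1)) q"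
    using Suc \<beta>_nonneg by (intro mult_left_mono next_exp_mono) auto
  with Suc.prems show ?case
    by (auto simp: min_def)
qed simp

lemma disc_iter_mono_iter: "q \<in> {1..Q} \<Longrightarrow> disc_iter \<beta> n x q \<le> disc_iter \<beta> (Suc n) x q"
proof (induction n arbitrary: x q)
  case 0
  then show ?case
    using disc_iter_nonneg[of q 1 x] by simp
next
  case (Suc n)
  have "\<beta> * next_exp (disc_iter \<beta> n y) q \<le> \<beta> * next_exp (disc_iter \<beta> (Suc n) y) q" for y
    using Suc \<beta>_nonneg by (intro mult_left_mono next_exp_mono) auto
  then show ?case
    by (simp only: disc_iter.simps) (intro add_left_mono min.mono; simp)
qed

lemma disc_iter_le: "q \<in> {1..Q} \<Longrightarrow> disc_iter \<beta> n x q \<le> real x + (2 * K + 1) / (1 - \<beta>)"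
proof (induction n arbitrary: x q)
  case 0
  then show ?case
    using K_nonneg \<beta>_less_1 by simp
next
  case (Suc n)
  have "next_exp (disc_iter \<beta> n 1) q \<le> next_exp (\<lambda>_. 1 + (2 * K + 1) / (1 - \<beta>)) q"
    by (intro next_exp_mono[OF Suc.prems]) (use Suc.IH[of _ 1] in simp)
  then have "\<beta> * next_exp (disc_iter \<beta> n 1) q \<le> \<beta> * (1 + (2 * K + 1) / (1 - \<beta>))"
    using Suc.prems \<beta>_nonneg by (simp add: next_exp_const mult_left_mono)
  also have "\<dots> = \<beta> + (2 * K + 1) / (1 - \<beta>) - (2 * K + 1)"
    using \<beta>_less_1 by (simp add: field_simps)
  finally have "\<beta> * next_exp (disc_iter \<beta> n 1) q \<le> \<beta> + (2 * K + 1) / (1 - \<beta>) - (2 * K + 1)" .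
  moreover have "c q \<le> K"
    using abs_c_le[OF Suc.prems] by simp
  ultimately show ?case
    using \<beta>_less_1 by (simp add: min_def)
qed

definition disc_value :: "nat \<Rightarrow> nat \<Rightarrow> real" where
  "disc_value x q = lim (\<lambda>n. disc_iter \<beta> n x q)"

lemma disc_iter_tendsto:
  assumes q: "q \<in> {1..Q}"
  shows "(\<lambda>n. disc_iter \<beta> n x q) \<longlonglongrightarrow> disc_value x q"
proof -
  have "incseq (\<lambda>n. disc_iter \<beta> n x q)"
    using disc_iter_mono_iter[OF q] by (simp add: incseq_SucI)
  then obtain L where "(\<lambda>n. disc_iter \<beta> n x q) \<longlonglongrightarrow> L"
    using incseq_convergent disc_iter_le[OF q] by metis
  then show ?thesis
    unfolding disc_value_def by (simp add: limI)
qed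

lemma disc_value_eq:
  assumes "q \<in> {1..Q}"
  shows "disc_value x q = real x + K +
    min (\<beta> * next_exp (disc_value (x + 1)) q) (c q + \<beta> * next_exp (disc_value 1) q)"
proof (rule LIMSEQ_unique)
  show "(\<lambda>n. disc_iter \<beta> (Suc n) x q) \<longlonglongrightarrow> disc_value x q"
    using disc_iter_tendsto[OF assms] by (rule LIMSEQ_Suc)
  show "(\<lambda>n. disc_iter \<beta> (Suc n) x q) \<longlonglongrightarrow> real x + K +
      min (\<beta> * next_exp (disc_value (x + 1)) q) (c q + \<beta> * next_exp (disc_value 1) q)"
    unfolding disc_iter.simps by (intro tendsto_intros tendsto_next_exp disc_iter_tendsto)
qed

lemma disc_value_mono_age: "q \<in> {1..Q} \<Longrightarrow> x \<le> y \<Longrightarrow> disc_value x q \<le> disc_value y q"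
  by (rule LIMSEQ_le[OF disc_iter_tendsto disc_iter_tendsto]) (auto intro!: exI[of _ 0] disc_iter_mono_age)

definition rel_value :: "nat \<Rightarrow> nat \<Rightarrow> real" where
  "rel_value x q = disc_value x q - disc_value 1 q"

lemma rel_value_eq:
  assumes q: "q \<in> {1..Q}"
  shows "rel_value x q = real x - 1 +
    min (\<beta> * next_exp (rel_value (x + 1)) q) (c q) - min (\<beta> * next_exp (rel_value 2) q) (c q)"
proof -
  have shift: "disc_value y q = real y + K + \<beta> * next_exp (disc_value 1) q +
      min (\<beta> * next_exp (rel_value (y + 1)) q) (c q)" for y
  proof -
    have "\<beta> * next_exp (disc_value (y + 1)) q = \<beta> * next_exp (rel_value (y + 1)) q + \<beta> * next_exp (disc_value 1) q"
      unfolding rel_value_def next_exp_diff by (simp add: algebra_simps)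
    then show ?thesis
      using disc_value_eq[OF q, of y] by (simp add: min_def)
  qed
  show ?thesis
    using shift[of x] shift[of 1] unfolding rel_value_def[of x] by (simp add: numeral_2_eq_2)
qed

lemma rel_value_mono: "q \<in> {1..Q} \<Longrightarrow> x \<le> y \<Longrightarrow> rel_value x q \<le> rel_value y q"
  unfolding rel_value_def using disc_value_mono_age by simp

lemma rel_value_nonneg: "q \<in> {1..Q} \<Longrightarrow> 1 \<le> x \<Longrightarrow> 0 \<le> rel_value x q"
  unfolding rel_value_def using disc_value_mono_age by simp

lemma rel_value_le: "q \<in> {1..Q} \<Longrightarrow> 1 \<le> x \<Longrightarrow> rel_value x q \<le> real x + K"
proof -
  assume q: "q \<in> {1..Q}" and x: "1 \<le> x"
  have "0 \<le> \<beta> * next_exp (rel_value 2) q"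
    using q \<beta>_nonneg by (auto intro!: mult_nonneg_nonneg next_exp_nonneg rel_value_nonneg)
  then have "min (\<beta> * next_exp (rel_value (x + 1)) q) (c q) - min (\<beta> * next_exp (rel_value 2) q) (c q) \<le> K"
    using abs_c_le[OF q] by (auto simp: min_def)
  then show ?thesis
    using rel_value_eq[OF q, of x] by simp
qed

end

end

definition age_potential :: "nat \<Rightarrow> real" where
  "age_potential x = real x * (real x - 1) / 2"

lemma age_potential_nonneg: "0 \<le> age_potential x"
  unfolding age_potential_def by (cases x) auto

lemma age_potential_Suc: "age_potential (Suc x) = age_potential x + real x"
  unfolding age_potential_def by (simp add: field_simps)

lemma age_potential_ge: "0 \<le> k \<Longrightarrow> k * real x - (k + 1)\<^sup>2 / 2 \<le> age_potential x"
proof -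
  have "age_potential x - (k * real x - (k + 1)\<^sup>2 / 2) = ((real x - k - 1/2)\<^sup>2 + k + 3/4) / 2"
    unfolding age_potential_def by (simp add: power2_eq_square field_simps)
  moreover assume "0 \<le> k"
  then have "0 \<le> ((real x - k - 1/2)\<^sup>2 + k + 3/4) / 2"
    by simp
  ultimately show ?thesis
    by linarith
qed

context age_mdp
begin

lemma terminal_potential_le:
  assumes "valid_policy \<pi>" "valid_state Q st"
  shows "terminal_exp \<pi> (\<lambda>st. age_potential (fst st)) T h st
    \<le> horizon_cost \<pi> stage_cost (\<lambda>_. 0) T h st + age_potential (fst st) + K * real T"
proof -
  have "- age_potential (fst st) + chain_sum (\<lambda>_. - K) T (snd st)
      \<le> horizon_cost \<pi> stage_cost (\<lambda>st. - age_potential (fst st)) T h st"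
  proof (rule subsolution_le_horizon_cost[OF assms])
    fix st :: state and s :: nat assume "valid_state Q st" and s: "s \<in> {0,1}"
    then have q: "snd st \<in> {1..Q}"
      by (simp add: valid_state_def)
    have "- K - age_potential (fst st) \<le> stage_cost st s - age_potential (next_age (fst st) s)"
      using s abs_c_le[OF q] K_nonneg age_potential_nonneg[of "fst st"]
      by (auto simp: stage_cost_def next_age_def age_potential_Suc age_potential_def[of 0])
    with q show "- K + - age_potential (fst st) \<le>
        stage_cost st s + next_exp (\<lambda>q'. - age_potential (fst (next_age (fst st) s, q'))) (snd st)"
      by (simp add: next_exp_const)
  qed
  moreover have "chain_sum (\<lambda>_. - K) T (snd st) = - K * real T"
    using assms(2) by (simp add: valid_state_def chain_sum_const)
  moreover have "horizon_cost \<pi> stage_cost (\<lambda>st. - age_potential (fst st)) T h st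
      = horizon_cost \<pi> stage_cost (\<lambda>_. 0) T h st - terminal_exp \<pi> (\<lambda>st. age_potential (fst st)) T h st"
    using horizon_cost_split[of \<pi> stage_cost "\<lambda>st. - age_potential (fst st)" T h st]
      terminal_exp_scale[of \<pi> "-1" "\<lambda>st. age_potential (fst st)" T h st] by simp
  ultimately show ?thesis
    by simp
qed

lemma terminal_age_le:
  assumes "valid_policy \<pi>" "valid_state Q st" "0 < k"
  shows "k * terminal_exp \<pi> (\<lambda>st. real (fst st)) T h st
    \<le> horizon_cost \<pi> stage_cost (\<lambda>_. 0) T h st + age_potential (fst st) + K * real T + (k + 1)\<^sup>2 / 2"
proof -
  have "k * terminal_exp \<pi> (\<lambda>st. real (fst st)) T h st - (k + 1)\<^sup>2 / 2
      = terminal_exp \<pi> (\<lambda>st. k * real (fst st)) T h st + - ((k + 1)\<^sup>2 / 2)"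
    by (simp add: terminal_exp_scale)
  also have "\<dots> = terminal_exp \<pi> (\<lambda>st. k * real (fst st) + - ((k + 1)\<^sup>2 / 2)) T h st"
    by (rule terminal_exp_add_const[OF assms(1,2), symmetric])
  also have "\<dots> \<le> terminal_exp \<pi> (\<lambda>st. age_potential (fst st)) T h st"
    using age_potential_ge assms(3) by (intro terminal_exp_mono[OF assms(1,2)]) simp
  finally show ?thesis
    using terminal_potential_le[OF assms(1,2), of T h] by linarith
qed

end

text \<open>Relative value functions \<open>H\<close> solving the average-cost optimality equation (ACOE), in the form
  in which they arise as vanishing-discount limits of \<open>rel_value\<close>.\<close>

locale age_acoe = age_mdp +
  fixes H :: "nat \<Rightarrow> nat \<Rightarrow> real"
  assumes H_nonneg: "\<And>x q. 1 \<le> x \<Longrightarrow> q \<in> {1..Q} \<Longrightarrow> 0 \<le> H x q"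
    and H_le: "\<And>x q. 1 \<le> x \<Longrightarrow> q \<in> {1..Q} \<Longrightarrow> H x q \<le> real x + K"
    and H_le_Suc: "\<And>x q. 1 \<le> x \<Longrightarrow> q \<in> {1..Q} \<Longrightarrow> H x q \<le> H (Suc x) q"
    and H_eq: "\<And>x q. 1 \<le> x \<Longrightarrow> q \<in> {1..Q} \<Longrightarrow>
      H x q = real x - 1 + min (next_exp (H (x + 1)) q) (c q) - min (next_exp (H 2) q) (c q)"

lemma (in age_mdp) age_acoe_exists: "\<exists>H. age_acoe Q p c K H"
proof -
  define \<beta> where "\<beta> k = real k / real (Suc k)" for k
  have \<beta>: "0 \<le> \<beta> k" "\<beta> k < 1" for k
    unfolding \<beta>_def by auto
  have "\<beta> \<longlonglongrightarrow> 1"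
    unfolding \<beta>_def by (rule LIMSEQ_n_over_Suc_n)
  define f where "f k st = (if valid_state Q st then rel_value (\<beta> k) (fst st) (snd st) else 0)" for k st
  have "\<bar>f k st\<bar> \<le> real (fst st) + K" for k st
    unfolding f_def valid_state_def using rel_value_nonneg[OF \<beta>] rel_value_le[OF \<beta>] K_nonneg by auto
  then obtain r where r: "strict_mono r" "\<And>st. convergent (\<lambda>k. f (r k) st)"
    using bounded_pointwise_convergent_subseq[of f] by blast
  define H where "H x q = lim (\<lambda>k. f (r k) (x, q))" for x q
  have lim: "(\<lambda>k. rel_value (\<beta> (r k)) x q) \<longlonglongrightarrow> H x q" if "1 \<le> x" "q \<in> {1..Q}" for x q
    using r(2)[of "(x, q)"] that unfolding H_def f_def valid_state_def by (simp add: convergent_LIMSEQ_iff)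
  have "(\<lambda>k. \<beta> (r k)) \<longlonglongrightarrow> 1"
    using LIMSEQ_subseq_LIMSEQ[OF \<open>\<beta> \<longlonglongrightarrow> 1\<close> r(1)] by (simp add: o_def)
  have "age_acoe_axioms Q p c K H"
  proof
    fix x q :: nat assume x: "1 \<le> x" and q: "q \<in> {1..Q}"
    show "0 \<le> H x q"
      by (rule LIMSEQ_le_const[OF lim[OF x q]]) (use rel_value_nonneg[OF \<beta> q x] in auto)
    show "H x q \<le> real x + K"
      by (rule LIMSEQ_le_const2[OF lim[OF x q]]) (use rel_value_le[OF \<beta> q x] in auto)
    show "H x q \<le> H (Suc x) q"
      by (rule LIMSEQ_le[OF lim[OF x q] lim]) (use rel_value_mono[OF \<beta> q, of x "Suc x"] x q in auto)
    have "(\<lambda>k. \<beta> (r k) * next_exp (rel_value (\<beta> (r k)) y) q) \<longlonglongrightarrow> 1 * next_exp (H y) q" if "1 \<le> y" for y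
      using that by (intro tendsto_mult tendsto_next_exp lim \<open>(\<lambda>k. \<beta> (r k)) \<longlonglongrightarrow> 1\<close>) auto
    then have "(\<lambda>k. rel_value (\<beta> (r k)) x q) \<longlonglongrightarrow>
        real x - 1 + min (1 * next_exp (H (x + 1)) q) (c q) - min (1 * next_exp (H 2) q) (c q)"
      unfolding rel_value_eq[OF \<beta> q] by (intro tendsto_diff tendsto_add tendsto_min tendsto_const) auto
    then show "H x q = real x - 1 + min (next_exp (H (x + 1)) q) (c q) - min (next_exp (H 2) q) (c q)"
      using LIMSEQ_unique[OF lim[OF x q]] by simp
  qed
  then show ?thesis
    using age_acoe.intro age_mdp_axioms by blast
qed

context age_acoe
begin

lemma H_1: "q \<in> {1..Q} \<Longrightarrow> H 1 q = 0"
  using H_eq[of 1 q] by (simp add: numeral_2_eq_2)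

lemma H_mono:
  assumes "1 \<le> x" "x \<le> y" "q \<in> {1..Q}"
  shows "H x q \<le> H y q"
  using assms(2)
proof (induction y rule: dec_induct)
  case (step y)
  then show ?case
    using H_le_Suc[of y q] assms(1,3) by simp
qed simp

lemma H_ge: "1 \<le> x \<Longrightarrow> q \<in> {1..Q} \<Longrightarrow> real x - 1 - 2 * K \<le> H x q"
proof -
  assume xq: "1 \<le> x" "q \<in> {1..Q}"
  have "0 \<le> next_exp (H (x + 1)) q"
    using xq by (intro next_exp_nonneg H_nonneg) auto
  then have "- K \<le> min (next_exp (H (x + 1)) q) (c q)" "min (next_exp (H 2) q) (c q) \<le> K"
    using abs_c_le[OF xq(2)] by (auto simp: min_def)
  then show ?thesis
    using H_eq[OF xq] by linarith
qed

definition gain :: "nat \<Rightarrow> real" where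
  "gain q = 1 + min (next_exp (H 2) q) (c q)"

definition threshold :: "nat \<Rightarrow> nat" where
  "threshold q = (LEAST t. c q \<le> next_exp (H (t + 1)) q)"

definition threshold_policy :: "nat \<Rightarrow> nat \<Rightarrow> nat" where
  "threshold_policy x q = (if threshold q \<le> x then 1 else 0)"

lemma threshold_le_iff:
  assumes q: "q \<in> {1..Q}"
  shows "threshold q \<le> t \<longleftrightarrow> c q \<le> next_exp (H (t + 1)) q"
proof
  have mono: "next_exp (H (t + 1)) q \<le> next_exp (H (t' + 1)) q" if "t \<le> t'" for t t'
    using q that by (intro next_exp_mono H_mono) auto
  define t0 where "t0 = nat \<lceil>3 * K\<rceil> + 1"
  have "next_exp (\<lambda>_. real t0 - 2 * K) q \<le> next_exp (H (t0 + 1)) q"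
    using q H_ge[of "t0 + 1"] by (intro next_exp_mono) auto
  then have "c q \<le> next_exp (H (t0 + 1)) q"
    using q abs_c_le[OF q] unfolding t0_def by (simp add: next_exp_const) linarith
  then have "c q \<le> next_exp (H (threshold q + 1)) q"
    unfolding threshold_def by (rule LeastI)
  moreover assume "threshold q \<le> t"
  ultimately show "c q \<le> next_exp (H (t + 1)) q"
    using mono by (meson order_trans)
next
  assume "c q \<le> next_exp (H (t + 1)) q"
  then show "threshold q \<le> t"
    unfolding threshold_def by (rule Least_le)
qed

abbreviation rel_cost :: "state \<Rightarrow> real" where
  "rel_cost st \<equiv> H (fst st) (snd st)"

lemma next_exp_H_next_age:
  assumes q: "q \<in> {1..Q}"
  shows "next_exp (H (next_age x s)) q = (if s = 0 then next_exp (H (x + 1)) q else 0)"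
proof (cases "s = 0")
  case False
  then have "next_exp (H (next_age x s)) q = next_exp (\<lambda>_. 0) q"
    unfolding next_exp_def
  proof (intro sum.cong refl)
    fix q' assume "q' \<in> {1..Q}"
    with False show "p q q' * H (next_age x s) q' = p q q' * 0"
      using H_1 by (simp add: next_age_def)
  qed
  with q False show ?thesis
    by (simp add: next_exp_const)
qed (simp add: next_age_def)

lemma gain_add_rel_cost:
  assumes "valid_state Q st"
  shows "gain (snd st) + rel_cost st = real (fst st) + min (next_exp (H (fst st + 1)) (snd st)) (c (snd st))"
  using assms H_eq[of "fst st" "snd st"] unfolding valid_state_def gain_def by simp

lemma acoe_le:
  assumes "valid_state Q st" "s \<in> {0,1}"
  shows "gain (snd st) + rel_cost st \<le> stage_cost st s + next_exp (\<lambda>q'. rel_cost (next_age (fst st) s, q')) (snd st)"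
  using assms gain_add_rel_cost[OF assms(1)]
  by (auto simp: valid_state_def stage_cost_def next_exp_H_next_age)

lemma acoe_threshold_policy:
  assumes "valid_state Q st"
  defines "s \<equiv> threshold_policy (fst st) (snd st)"
  shows "stage_cost st s + next_exp (\<lambda>q'. rel_cost (next_age (fst st) s, q')) (snd st)
    \<le> gain (snd st) + rel_cost st"
  using assms threshold_le_iff[of "snd st" "fst st"] gain_add_rel_cost[OF assms(1)]
  by (auto simp: valid_state_def stage_cost_def next_exp_H_next_age threshold_policy_def)

lemma threshold_policy_cost_le:
  assumes pol: "valid_policy \<pi>" and st: "valid_state Q st"
  shows "horizon_cost (stat_det threshold_policy) stage_cost (\<lambda>_. 0) T h st
    \<le> horizon_cost \<pi> stage_cost (\<lambda>_. 0) T h st + terminal_exp \<pi> rel_cost T h st"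
proof -
  have pol_thr: "valid_policy (stat_det threshold_policy)"
    by (rule valid_policy_stat_det) (simp add: threshold_policy_def)
  have "horizon_cost (stat_det threshold_policy) stage_cost rel_cost T h st \<le> rel_cost st + chain_sum gain T (snd st)"
    using acoe_threshold_policy by (intro horizon_cost_le_supersolution[OF st]) (simp add: threshold_policy_def)
  also have "\<dots> \<le> horizon_cost \<pi> stage_cost rel_cost T h st"
    using acoe_le by (rule subsolution_le_horizon_cost[OF pol st])
  finally have "horizon_cost (stat_det threshold_policy) stage_cost rel_cost T h st
      \<le> horizon_cost \<pi> stage_cost rel_cost T h st" .
  moreover have "0 \<le> terminal_exp (stat_det threshold_policy) rel_cost T h st"
    using terminal_exp_mono[OF pol_thr st, of "\<lambda>_. 0" rel_cost] H_nonneg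
    by (simp add: terminal_exp_zero valid_state_def)
  ultimately show ?thesis
    using horizon_cost_split[of \<pi> stage_cost rel_cost T h st]
      horizon_cost_split[of "stat_det threshold_policy" stage_cost rel_cost T h st] by linarith
qed

theorem threshold_policy_average_optimal:
  assumes pol: "valid_policy \<pi>" and st: "valid_state Q st"
  shows "limsup (\<lambda>T. ereal (horizon_cost (stat_det threshold_policy) stage_cost (\<lambda>_. 0) T [] st / real T))
    \<le> limsup (\<lambda>T. ereal (horizon_cost \<pi> stage_cost (\<lambda>_. 0) T [] st / real T))"
proof (rule limsup_average_le)
  fix k :: real assume k: "0 < k"
  define J where "J T = horizon_cost \<pi> stage_cost (\<lambda>_. 0) T [] st" for T
  define C where "C = (age_potential (fst st) + (k + 1)\<^sup>2 / 2) / k + K"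
  have "horizon_cost (stat_det threshold_policy) stage_cost (\<lambda>_. 0) T [] st \<le> (1 + 1/k) * J T + K / k * real T + C" for T
  proof -
    have "terminal_exp \<pi> rel_cost T [] st \<le> terminal_exp \<pi> (\<lambda>st. real (fst st) + K) T [] st"
      using H_le by (intro terminal_exp_mono[OF pol st]) (simp add: valid_state_def)
    also have "\<dots> = terminal_exp \<pi> (\<lambda>st. real (fst st)) T [] st + K"
      by (rule terminal_exp_add_const[OF pol st])
    also have "\<dots> \<le> (J T + age_potential (fst st) + K * real T + (k + 1)\<^sup>2 / 2) / k + K"
      using terminal_age_le[OF pol st k, of T "[]"] k unfolding J_def by (simp add: field_simps)
    also have "\<dots> = 1/k * J T + K / k * real T + C"
      unfolding C_def using k by (simp add: field_simps)
    finally show ?thesis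
      using threshold_policy_cost_le[OF pol st, of T "[]"] unfolding J_def by (simp add: algebra_simps)
  qed
  then show "\<exists>C. \<forall>T. horizon_cost (stat_det threshold_policy) stage_cost (\<lambda>_. 0) T [] st
      \<le> (1 + 1/k) * horizon_cost \<pi> stage_cost (\<lambda>_. 0) T [] st + K / k * real T + C"
    unfolding J_def by blast
qed

end

theorem lemma1:
  fixes Q :: nat and p :: "nat \<Rightarrow> nat \<Rightarrow> real" and W lam :: real and \<omega> :: "nat \<Rightarrow> real"
  assumes "Q \<ge> 1"
    and "\<forall>q\<in>{1..Q}. \<forall>q'\<in>{1..Q}. 0 \<le> p q q'"
    and "\<forall>q\<in>{1..Q}. (\<Sum>q'\<in>{1..Q}. p q q') = 1"
    and "W \<ge> 0" and "lam \<ge> 0"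
  shows "\<exists>\<mu> :: nat \<Rightarrow> nat \<Rightarrow> nat.
           (\<forall>x0 \<ge> 1. \<forall>q0\<in>{1..Q}. \<forall>\<pi>. valid_policy \<pi> \<longrightarrow>
               avg_cost Q p W lam \<omega> (stat_det \<mu>) (x0, q0) \<le> avg_cost Q p W lam \<omega> \<pi> (x0, q0))
         \<and> (\<forall>q\<in>{1..Q}. \<exists>\<tau>::nat. \<forall>x \<ge> 1. \<mu> x q = (if x \<ge> \<tau> then 1 else 0))"
proof -
  define c where "c q = W + lam * \<omega> q" for q
  define K where "K = (\<Sum>q\<in>{1..Q}. \<bar>c q\<bar>)"
  interpret age_mdp Q p c K
    by unfold_locales (use assms in \<open>auto simp: K_def intro: member_le_sum\<close>)
  obtain H where "age_acoe Q p c K H"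
    using age_acoe_exists by blast
  then interpret age_acoe Q p c K H .
  have cost: "(\<lambda>st s. C_X W (fst st) (snd st) s + lam * C_Q \<omega> (fst st) (snd st) s) = stage_cost"
    by (auto simp: fun_eq_iff C_X_def C_Q_def stage_cost_def c_def algebra_simps)
  show ?thesis
  proof (intro exI[of _ threshold_policy] conjI allI impI ballI)
    fix x0 q0 :: nat and \<pi> assume "1 \<le> x0" "q0 \<in> {1..Q}" "valid_policy \<pi>"
    then show "avg_cost Q p W lam \<omega> (stat_det threshold_policy) (x0, q0) \<le> avg_cost Q p W lam \<omega> \<pi> (x0, q0)"
      unfolding avg_cost_def exp_cost_eq_horizon_cost cost
      by (intro threshold_policy_average_optimal) (simp_all add: valid_state_def)
  next
    fix q show "\<exists>\<tau>::nat. \<forall>x \<ge> 1. threshold_policy x q = (if x \<ge> \<tau> then 1 else 0)"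
      by (auto simp: threshold_policy_def)
  qed
qed

end
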